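(* Let $k_0(p),k_1(p)$ be complex-valued functions of $p$ with $|k_0(p)|^2+|k_1(p)|^2=1$. The tuple $(k_0(p),k_1(p))$ is simulable if and only if $\frac{k_0(p)}{k_1(p)}$ belongs to the field generated by $\sqrt{\frac{p}{1-p}}$ and $\mathbb{C}$; equivalently, if and only if there exist polynomials $g_1,g_2,g_3,g_4$ in $p$ with complex coefficients ($g_2,g_4\neq 0$) such that $$\frac{k_0(p)}{k_1(p)}=\frac{g_1(p)}{g_2(p)}\sqrt{\frac{p}{1-p}}+\frac{g_3(p)}{g_4(p)}.$$
   Context: Let $p\in[0,1]$ be an unknown parameter and let $|p\rangle=\sqrt{p}|0\rangle+\sqrt{1-p}|1\rangle$ (the "quantum coin"). For a complex function $h(p)$ write $|f_h\rangle=\frac{1}{\sqrt{1+|h(p)|^2}}(h(p)|0\rangle+|1\rangle)$. A tuple $(k_0(p),k_1(p))$ of complex functions with $|k_0|^2+|k_1|^2=1$ is called simulable if, starting from an unbounded supply of copies of $|p\rangle$, one can produce the single-qubit state $|f_{k_0/k_1}\rangle=k_0(p)|0\rangle+k_1(p)|1\rangle$ (up to a global phase) in finitely many steps with nonzero success probability, where each step applies a unitary transformation or a measurement (in the computational basis) to the current state together with auxiliary qubits; the operations may not depend on $p$. Auxiliary qubits may be other simulable states or constant states $|a_c\rangle=\frac{1}{\sqrt{|a|^2+1}}(a|0\rangle+|1\rangle)$ with $a\in\mathbb{C}$ a constant independent of $p$. *)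

theory Defs
  imports Complex_Main "HOL-Computational_Algebra.Polynomial"
begin

text \<open>An (unnormalised) state of n qubits is a map from basis indices i < 2^n
  (qubit 0 is the most significant bit, the last qubit is the least
  significant one) to complex amplitudes; entries with index \<ge> 2^n are 0.
  A family of such states indexed by the coin parameter p is a function
  real \<Rightarrow> nat \<Rightarrow> complex.\<close>

definition qcoin :: "real \<Rightarrow> nat \<Rightarrow> complex" where
  "qcoin p i = (if i = 0 then complex_of_real (sqrt p)
                else if i = 1 then complex_of_real (sqrt (1 - p)) else 0)"

definition const_state :: "complex \<Rightarrow> nat \<Rightarrow> complex" where
  "const_state a i = (if i = 0 then a / complex_of_real (sqrt ((cmod a)\<^sup>2 + 1))
                      else if i = 1 then 1 / complex_of_real (sqrt ((cmod a)\<^sup>2 + 1))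
                      else 0)"

definition tensor :: "nat \<Rightarrow> nat \<Rightarrow> (nat \<Rightarrow> complex) \<Rightarrow> (nat \<Rightarrow> complex) \<Rightarrow> nat \<Rightarrow> complex" where
  "tensor m n v w i = (if i < 2 ^ (m + n) then v (i div 2 ^ n) * w (i mod 2 ^ n) else 0)"

definition unitary_on :: "nat \<Rightarrow> (nat \<Rightarrow> nat \<Rightarrow> complex) \<Rightarrow> bool" where
  "unitary_on n U \<longleftrightarrow> (\<forall>i < 2 ^ n. \<forall>j < 2 ^ n.
      (\<Sum>k < 2 ^ n. cnj (U k i) * U k j) = (if i = j then 1 else 0))"

definition apply_op :: "nat \<Rightarrow> (nat \<Rightarrow> nat \<Rightarrow> complex) \<Rightarrow> (nat \<Rightarrow> complex) \<Rightarrow> nat \<Rightarrow> complex" where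
  "apply_op n U v i = (if i < 2 ^ n then (\<Sum>j < 2 ^ n. U i j * v j) else 0)"

text \<open>Computational-basis measurement of the last qubit of an (n+1)-qubit state,
  post-selected on outcome b; the measured qubit is removed.  The result is the
  unnormalised post-measurement state (its squared norm is the probability of
  this branch).\<close>
definition measure_last :: "nat \<Rightarrow> nat \<Rightarrow> (nat \<Rightarrow> complex) \<Rightarrow> nat \<Rightarrow> complex" where
  "measure_last n b v i = (if i < 2 ^ n then v (2 * i + b) else 0)"

text \<open>States (families, up to a nonzero scalar factor) obtainable by a
  p-independent protocol along one branch of measurement outcomes.\<close>
inductive reach :: "nat \<Rightarrow> (real \<Rightarrow> nat \<Rightarrow> complex) \<Rightarrow> bool" where
  start: "reach 0 (\<lambda>p i. if i = 0 then 1 else 0)"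
| add_coin: "reach n v \<Longrightarrow> reach (n + 1) (\<lambda>p. tensor n 1 (v p) (qcoin p))"
| add_const: "reach n v \<Longrightarrow> reach (n + 1) (\<lambda>p. tensor n 1 (v p) (const_state a))"
| add_sim: "reach n v \<Longrightarrow> reach 1 w \<Longrightarrow> reach (n + 1) (\<lambda>p. tensor n 1 (v p) (w p))"
| unitary: "reach n v \<Longrightarrow> unitary_on n U \<Longrightarrow> reach n (\<lambda>p. apply_op n U (v p))"
| measure: "reach (n + 1) v \<Longrightarrow> b < 2 \<Longrightarrow> reach n (\<lambda>p. measure_last n b (v p))"

text \<open>The tuple (k0,k1) is simulable if some protocol produces, for all but
  finitely many p in [0,1], a single-qubit output with nonzero success
  probability which equals k0|0> + k1|1> up to a (p-dependent) nonzero scalar,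
  i.e. up to normalisation and global phase.\<close>
definition simulable :: "(real \<Rightarrow> complex) \<Rightarrow> (real \<Rightarrow> complex) \<Rightarrow> bool" where
  "simulable k0 k1 \<longleftrightarrow> (\<exists>v. reach 1 v \<and>
     finite {p \<in> {0..1}. \<not> ((v p 0 \<noteq> 0 \<or> v p 1 \<noteq> 0) \<and>
        (\<exists>c. c \<noteq> 0 \<and> v p 0 = c * k0 p \<and> v p 1 = c * k1 p))})"

end

theory Submission
  imports Defs
begin

text \<open>Write x = p, S = \<surd>p and T = \<surd>(1 - p), so that S^2 = x and T^2 = 1 - x.
  Every amplitude of a reachable state is a polynomial expression in x, S, T which is
  homogeneous in the parity of its total degree in (S, T): the coin contributes odd
  amplitudes, constants even ones, tensor products multiply parities, and unitaries and
  measurements only take linear combinations of amplitudes of one state.  After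
  multiplying an odd amplitude by T, the two output amplitudes are even, i.e. of the form
  a + d S T with a, d polynomials in x, and their quotient is rationalised with the
  conjugate a' - d' S T.  Since S T = (1 - x) \<surd>(x/(1 - x)), this puts k0/k1 into
  \<complex>(x)(\<surd>(x/(1 - x))).  The norm a'^2 - d'^2 x (1 - x) cannot vanish identically,
  because x (1 - x) has a simple zero at 0 and so is not a square of rational functions.

  Conversely, the ratios v0/v1 realisable by one-qubit outputs contain the constants and
  S/T, and are closed under products, sums and inverses: a CNOT followed by post-selection
  multiplies ratios, a two-qubit unitary producing (|01\<rangle> + |10\<rangle>)/\<surd>2 adds them, and
  a bit flip inverts them.  As 1/(1 - x) = 1 + (S/T)^2, this yields x, hence all
  polynomials, their inverses and finally every element of \<complex>(x)(\<surd>(x/(1 - x))).\<close>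

subsection \<open>Polynomial expressions in \<open>p\<close>, \<open>\<surd>p\<close> and \<open>\<surd>(1 - p)\<close>\<close>

definition coin_expr ::
    "complex poly \<Rightarrow> complex poly \<Rightarrow> complex poly \<Rightarrow> complex poly \<Rightarrow> real \<Rightarrow> complex" where
  "coin_expr A B C D p =
     poly A (of_real p) + poly B (of_real p) * of_real (sqrt p)
     + poly C (of_real p) * of_real (sqrt (1 - p))
     + poly D (of_real p) * of_real (sqrt p) * of_real (sqrt (1 - p))"

lemma mult_sqrt_expr:
  fixes a b c d a' b' c' d' S T :: "'a::comm_ring"
  shows "(a + b*S + c*T + d*S*T) * (a' + b'*S + c'*T + d'*S*T) =
    (a*a' + b*b'*(S*S) + c*c'*(T*T) + d*d'*(S*S)*(T*T))
    + (a*b' + b*a' + (c*d' + d*c')*(T*T)) * S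
    + (a*c' + c*a' + (b*d' + d*b')*(S*S)) * T
    + (a*d' + d*a' + b*c' + c*b') * S * T"
  by (simp add: algebra_simps)

lemma coin_expr_mult:
  assumes "p \<in> {0..1}"
  shows "coin_expr A B C D p * coin_expr A' B' C' D' p =
    coin_expr (A*A' + B*B'*[:0,1:] + C*C'*[:1,-1:] + D*D'*[:0,1,-1:])
              (A*B' + B*A' + (C*D' + D*C')*[:1,-1:])
              (A*C' + C*A' + (B*D' + D*B')*[:0,1:])
              (A*D' + D*A' + B*C' + C*B') p"
proof -
  have SS: "complex_of_real (sqrt p) * of_real (sqrt p) = of_real p"
    using assms by (simp flip: of_real_mult)
  have TT: "complex_of_real (sqrt (1 - p)) * of_real (sqrt (1 - p)) = 1 - of_real p"
    using assms by (simp flip: of_real_mult)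
  show ?thesis
    unfolding coin_expr_def mult_sqrt_expr SS TT by (simp add: algebra_simps)
qed

lemma coin_expr_add:
  "coin_expr A B C D p + coin_expr A' B' C' D' p = coin_expr (A + A') (B + B') (C + C') (D + D') p"
  by (simp add: coin_expr_def algebra_simps)

text \<open>Amplitudes of odd (\<open>e\<close>) or even (\<open>\<not> e\<close>) total degree in \<open>\<surd>p\<close> and \<open>\<surd>(1 - p)\<close>.\<close>

definition coin_graded :: "bool \<Rightarrow> (real \<Rightarrow> complex) \<Rightarrow> bool" where
  "coin_graded e f \<longleftrightarrow> (\<exists>A B C D. (if e then A = 0 \<and> D = 0 else B = 0 \<and> C = 0) \<and>
     (\<forall>p\<in>{0..1}. f p = coin_expr A B C D p))"

lemma coin_graded_mult:
  assumes "coin_graded e f" "coin_graded e' g"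
  shows "coin_graded (e \<noteq> e') (\<lambda>p. f p * g p)"
proof -
  obtain A B C D where par: "if e then A = 0 \<and> D = 0 else B = 0 \<and> C = 0"
    and f: "\<forall>p\<in>{0..1}. f p = coin_expr A B C D p"
    using assms(1) unfolding coin_graded_def by blast
  obtain A' B' C' D' where par': "if e' then A' = 0 \<and> D' = 0 else B' = 0 \<and> C' = 0"
    and g: "\<forall>p\<in>{0..1}. g p = coin_expr A' B' C' D' p"
    using assms(2) unfolding coin_graded_def by blast
  define A'' where "A'' = A*A' + B*B'*[:0,1:] + C*C'*[:1,-1:] + D*D'*[:0,1,-1:]"
  define B'' where "B'' = A*B' + B*A' + (C*D' + D*C')*[:1,-1:]"
  define C'' where "C'' = A*C' + C*A' + (B*D' + D*B')*[:0,1:]"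
  define D'' where "D'' = A*D' + D*A' + B*C' + C*B'"
  have "\<forall>p\<in>{0..1}. f p * g p = coin_expr A'' B'' C'' D'' p"
    using f g by (simp add: coin_expr_mult A''_def B''_def C''_def D''_def)
  moreover have "if e \<noteq> e' then A'' = 0 \<and> D'' = 0 else B'' = 0 \<and> C'' = 0"
    using par par' by (auto simp: A''_def B''_def C''_def D''_def split: if_splits)
  ultimately show ?thesis unfolding coin_graded_def by blast
qed

lemma coin_graded_add:
  assumes "coin_graded e f" "coin_graded e g"
  shows "coin_graded e (\<lambda>p. f p + g p)"
proof -
  obtain A B C D where par: "if e then A = 0 \<and> D = 0 else B = 0 \<and> C = 0"
    and f: "\<forall>p\<in>{0..1}. f p = coin_expr A B C D p"
    using assms(1) unfolding coin_graded_def by blast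
  obtain A' B' C' D' where par': "if e then A' = 0 \<and> D' = 0 else B' = 0 \<and> C' = 0"
    and g: "\<forall>p\<in>{0..1}. g p = coin_expr A' B' C' D' p"
    using assms(2) unfolding coin_graded_def by blast
  have "\<forall>p\<in>{0..1}. f p + g p = coin_expr (A + A') (B + B') (C + C') (D + D') p"
    using f g by (simp add: coin_expr_add)
  moreover have "if e then A + A' = 0 \<and> D + D' = 0 else B + B' = 0 \<and> C + C' = 0"
    using par par' by (simp split: if_splits)
  ultimately show ?thesis unfolding coin_graded_def by blast
qed

lemma coin_graded_zero: "coin_graded e (\<lambda>p. 0)"
  unfolding coin_graded_def by (intro exI[of _ 0]) (simp add: coin_expr_def)

lemma coin_graded_const: "coin_graded False (\<lambda>p. c)"
  unfolding coin_graded_def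
  by (rule exI[of _ "[:c:]"], intro exI[of _ 0]) (simp add: coin_expr_def)

lemma coin_graded_qcoin: "coin_graded True (\<lambda>p. qcoin p j)"
  unfolding coin_graded_def
  by (rule exI[of _ 0], rule exI[of _ "if j = 0 then 1 else 0"],
      rule exI[of _ "if j = 1 then 1 else 0"], rule exI[of _ 0])
     (simp add: coin_expr_def qcoin_def)

lemma coin_graded_cmult: "coin_graded e f \<Longrightarrow> coin_graded e (\<lambda>p. c * f p)"
  using coin_graded_mult[OF coin_graded_const, of e f c] by simp

lemma coin_graded_if: "coin_graded e f \<Longrightarrow> coin_graded e (\<lambda>p. if P then f p else 0)"
  by (cases P) (simp_all add: coin_graded_zero)

lemma coin_graded_sum:
  "finite S \<Longrightarrow> (\<And>j. coin_graded e (f j)) \<Longrightarrow> coin_graded e (\<lambda>p. \<Sum>j\<in>S. f j p)"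
  by (induction S rule: finite_induct) (simp_all add: coin_graded_zero coin_graded_add)

lemma reach_coin_graded: "reach n v \<Longrightarrow> \<exists>e. \<forall>i. coin_graded e (\<lambda>p. v p i)"
proof (induction rule: reach.induct)
  case start
  show ?case using coin_graded_const by blast
next
  case (add_coin n v)
  then obtain e where "\<forall>i. coin_graded e (\<lambda>p. v p i)" by blast
  then have "coin_graded (e \<noteq> True) (\<lambda>p. tensor n 1 (v p) (qcoin p) i)" for i
    unfolding tensor_def by (intro coin_graded_if coin_graded_mult coin_graded_qcoin) blast
  then show ?case by blast
next
  case (add_const n v a)
  then obtain e where "\<forall>i. coin_graded e (\<lambda>p. v p i)" by blast
  then have "coin_graded (e \<noteq> False) (\<lambda>p. tensor n 1 (v p) (const_state a) i)" for i
    unfolding tensor_def by (intro coin_graded_if coin_graded_mult coin_graded_const) blast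
  then show ?case by blast
next
  case (add_sim n v w)
  then obtain e e' where "\<forall>i. coin_graded e (\<lambda>p. v p i)" "\<forall>i. coin_graded e' (\<lambda>p. w p i)"
    by blast
  then have "coin_graded (e \<noteq> e') (\<lambda>p. tensor n 1 (v p) (w p) i)" for i
    unfolding tensor_def by (intro coin_graded_if coin_graded_mult) blast+
  then show ?case by blast
next
  case (unitary n v U)
  then obtain e where "\<forall>i. coin_graded e (\<lambda>p. v p i)" by blast
  then have "coin_graded e (\<lambda>p. apply_op n U (v p) i)" for i
    unfolding apply_op_def by (intro coin_graded_if coin_graded_sum coin_graded_cmult) blast+
  then show ?case by blast
next
  case (measure n v b)
  then obtain e where "\<forall>i. coin_graded e (\<lambda>p. v p i)" by blast
  then have "coin_graded e (\<lambda>p. measure_last n b (v p) i)" for i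
    unfolding measure_last_def by (intro coin_graded_if) blast
  then show ?case by blast
qed

subsection \<open>Ratios of graded amplitudes\<close>

lemma poly_sq_eq_sq_mult_odd_order:
  fixes A D q :: "'a::idom poly"
  assumes "A * A = D * D * q" "q \<noteq> 0" "odd (order a q)"
  shows "A = 0 \<and> D = 0"
proof (cases "D = 0")
  case True
  then show ?thesis using assms(1) by simp
next
  case False
  then have "D * D * q \<noteq> 0" using assms(2) by simp
  then have "A \<noteq> 0" using assms(1) by auto
  have "order a (A * A) = 2 * order a A" using \<open>A \<noteq> 0\<close> by (simp add: order_mult)
  moreover have "order a (D * D * q) = 2 * order a D + order a q"
    using \<open>D * D * q \<noteq> 0\<close> \<open>D \<noteq> 0\<close> by (simp add: order_mult)
  moreover have "order a (A * A) = order a (D * D * q)" using assms(1) by simp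
  ultimately have "even (order a q)" by presburger
  then show ?thesis using assms(3) by simp
qed

lemma order_0_x_one_minus_x: "order 0 ([:0, 1, -1:] :: complex poly) = 1"
proof -
  have "([:0, 1, -1:] :: complex poly) = [:0, 1:] * [:1, -1:]" by simp
  moreover have "order 0 ([:0, 1:] * [:1, -1::complex:]) = 1"
    by (subst order_mult) (auto simp: order_0I order_power_n_n[of 0 1, simplified])
  ultimately show ?thesis by simp
qed

lemma finite_real_roots: "(N :: complex poly) \<noteq> 0 \<Longrightarrow> finite {p :: real. poly N (of_real p) = 0}"
  using finite_vimageI[OF poly_roots_finite, of N complex_of_real]
  by (simp add: vimage_def inj_on_def)

lemma sqrt_mult_sqrt_one_minus:
  assumes "0 \<le> p" "p < 1"
  shows "sqrt p * sqrt (1 - p) = (1 - p) * sqrt (p / (1 - p))"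
proof -
  have "sqrt (1 - p) * sqrt (1 - p) = 1 - p" using assms by simp
  moreover have "sqrt (1 - p) > 0" using assms by simp
  ultimately show ?thesis by (simp add: real_sqrt_divide field_simps)
qed

lemma even_coin_expr_divide:
  fixes A D A' D' :: "complex poly"
  defines "N \<equiv> A' * A' - D' * D' * [:0, 1, -1:]"
  assumes p: "0 \<le> p" "p < 1" and N_p: "poly N (of_real p) \<noteq> 0"
  shows "coin_expr A' 0 0 D' p \<noteq> 0"
    and "coin_expr A 0 0 D p / coin_expr A' 0 0 D' p =
      poly ((D * A' - A * D') * [:1, -1:]) (of_real p) / poly N (of_real p)
        * of_real (sqrt (p / (1 - p)))
      + poly (A * A' - D * D' * [:0, 1, -1:]) (of_real p) / poly N (of_real p)"
proof -
  let ?x = "complex_of_real p" and ?q = "complex_of_real (sqrt (p / (1 - p)))"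
  let ?g = "coin_expr A' 0 0 D' p" and ?g_conj = "coin_expr A' 0 0 (- D') p"
  have p01: "p \<in> {0..1}" using p by simp
  have norm: "?g * ?g_conj = poly N ?x"
    by (simp only: coin_expr_mult[OF p01]) (simp add: N_def coin_expr_def algebra_simps)
  then show g_nz: "?g \<noteq> 0" using N_p by auto
  have ST: "complex_of_real (sqrt p) * of_real (sqrt (1 - p)) = (1 - ?x) * ?q"
    using arg_cong[OF sqrt_mult_sqrt_one_minus[OF p], of complex_of_real] by simp
  let ?g1 = "(D * A' - A * D') * [:1, -1:]" and ?g3 = "A * A' - D * D' * [:0, 1, -1:]"
  have "coin_expr A 0 0 D p * ?g_conj = coin_expr ?g3 0 0 (D * A' - A * D') p"
    by (simp only: coin_expr_mult[OF p01]) (simp add: coin_expr_def algebra_simps)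
  also have "\<dots> = poly ?g3 ?x
      + poly (D * A' - A * D') ?x * (of_real (sqrt p) * of_real (sqrt (1 - p)))"
    by (simp add: coin_expr_def mult.assoc)
  also have "\<dots> = poly ?g3 ?x + poly ?g1 ?x * ?q"
    by (simp add: ST algebra_simps)
  finally have "coin_expr A 0 0 D p * ?g_conj = poly ?g3 ?x + poly ?g1 ?x * ?q" .
  moreover have "coin_expr A 0 0 D p / ?g = coin_expr A 0 0 D p * ?g_conj / poly N ?x"
    using g_nz N_p norm by (simp add: field_simps)
  ultimately show "coin_expr A 0 0 D p / ?g = poly ?g1 ?x / poly N ?x * ?q + poly ?g3 ?x / poly N ?x"
    by (simp only: add_divide_distrib times_divide_eq_left add.commute)
qed

lemma coin_graded_times_even:
  assumes "coin_graded e f"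
  obtains A D where
    "\<forall>p\<in>{0..1}. f p * (if e then of_real (sqrt (1 - p)) else 1) = coin_expr A 0 0 D p"
proof -
  have "qcoin p 1 = of_real (sqrt (1 - p))" for p by (simp add: qcoin_def)
  then have "coin_graded e (\<lambda>p. if e then of_real (sqrt (1 - p)) else 1)"
    using coin_graded_qcoin[of 1] coin_graded_const by (cases e) simp_all
  from coin_graded_mult[OF assms this]
  have "coin_graded False (\<lambda>p. f p * (if e then of_real (sqrt (1 - p)) else 1))"
    by simp
  then show ?thesis using that unfolding coin_graded_def by auto
qed

lemma coin_graded_ratio:
  assumes "coin_graded e f" "coin_graded e g" and g_nz: "infinite {p \<in> {0..1}. g p \<noteq> 0}"
  obtains g1 g3 N :: "complex poly" where "N \<noteq> 0"
    and "\<And>p. 0 \<le> p \<Longrightarrow> p < 1 \<Longrightarrow> poly N (of_real p) \<noteq> 0 \<Longrightarrow> g p \<noteq> 0 \<and>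
      f p / g p = poly g1 (of_real p) / poly N (of_real p) * of_real (sqrt (p / (1 - p)))
                  + poly g3 (of_real p) / poly N (of_real p)"
proof -
  define \<mu> where "\<mu> p = (if e then complex_of_real (sqrt (1 - p)) else 1)" for p
  have \<mu>_nz: "\<mu> p \<noteq> 0" if "p < 1" for p using that by (simp add: \<mu>_def)
  obtain A D where f: "\<forall>p\<in>{0..1}. f p * \<mu> p = coin_expr A 0 0 D p"
    using coin_graded_times_even[OF assms(1)] unfolding \<mu>_def by blast
  obtain A' D' where g: "\<forall>p\<in>{0..1}. g p * \<mu> p = coin_expr A' 0 0 D' p"
    using coin_graded_times_even[OF assms(2)] unfolding \<mu>_def by blast
  define N where "N = A' * A' - D' * D' * [:0, 1, -1:]"
  have "N \<noteq> 0"
  proof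
    assume "N = 0"
    then have "A' * A' = D' * D' * [:0, 1, -1:]" unfolding N_def by (simp only: right_minus_eq)
    then have "A' = 0 \<and> D' = 0"
      by (rule poly_sq_eq_sq_mult_odd_order[where a = 0]) (simp_all add: order_0_x_one_minus_x)
    then have "g p = 0" if "p \<in> {0..<1}" for p
      using g \<mu>_nz that by (auto simp: coin_expr_def)
    then have "{p \<in> {0..1}. g p \<noteq> 0} \<subseteq> {1}" by force
    then show False using g_nz finite_subset by blast
  qed
  moreover have "g p \<noteq> 0 \<and>
      f p / g p = poly ((D * A' - A * D') * [:1, -1:]) (of_real p) / poly N (of_real p)
                    * of_real (sqrt (p / (1 - p)))
                  + poly (A * A' - D * D' * [:0, 1, -1:]) (of_real p) / poly N (of_real p)"
    if p: "0 \<le> p" "p < 1" and N_p: "poly N (of_real p) \<noteq> 0" for p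
  proof -
    have fg: "f p * \<mu> p = coin_expr A 0 0 D p" "g p * \<mu> p = coin_expr A' 0 0 D' p"
      using f g p by auto
    have "g p \<noteq> 0"
      using even_coin_expr_divide(1)[OF p N_p[unfolded N_def]] fg(2) by auto
    moreover have "f p / g p = coin_expr A 0 0 D p / coin_expr A' 0 0 D' p"
      using \<mu>_nz[OF p(2)] by (simp flip: fg)
    ultimately show ?thesis
      using even_coin_expr_divide(2)[OF p N_p[unfolded N_def], of A D] by (simp add: N_def)
  qed
  ultimately show ?thesis using that by blast
qed

lemma simulable_imp_ratio_form:
  fixes k0 k1 :: "real \<Rightarrow> complex"
  assumes k1_nz: "infinite {p \<in> {0..1}. k1 p \<noteq> 0}" and sim: "simulable k0 k1"
  shows "\<exists>g1 g2 g3 g4 :: complex poly. g2 \<noteq> 0 \<and> g4 \<noteq> 0 \<and>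
       finite {p \<in> {0..1}. \<not> (k1 p \<noteq> 0 \<and>
          k0 p / k1 p = poly g1 (complex_of_real p) / poly g2 (complex_of_real p)
                          * complex_of_real (sqrt (p / (1 - p)))
                        + poly g3 (complex_of_real p) / poly g4 (complex_of_real p))}"
proof -
  obtain v where "reach 1 v" and fin_E: "finite {p \<in> {0..1}. \<not> ((v p 0 \<noteq> 0 \<or> v p 1 \<noteq> 0) \<and>
        (\<exists>c. c \<noteq> 0 \<and> v p 0 = c * k0 p \<and> v p 1 = c * k1 p))}" (is "finite ?E")
    using sim unfolding simulable_def by blast
  obtain e where graded: "\<forall>i. coin_graded e (\<lambda>p. v p i)"
    using reach_coin_graded[OF \<open>reach 1 v\<close>] by blast
  have "{p \<in> {0..1}. k1 p \<noteq> 0} - ?E \<subseteq> {p \<in> {0..1}. v p 1 \<noteq> 0}" by auto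
  then have "infinite {p \<in> {0..1}. v p 1 \<noteq> 0}"
    by (rule infinite_super) (rule Diff_infinite_finite[OF fin_E k1_nz])
  then obtain g1 g3 N where "N \<noteq> 0" and ratio: "\<And>p. 0 \<le> p \<Longrightarrow> p < 1 \<Longrightarrow>
      poly N (of_real p) \<noteq> 0 \<Longrightarrow> v p 1 \<noteq> 0 \<and>
      v p 0 / v p 1 = poly g1 (of_real p) / poly N (of_real p) * of_real (sqrt (p / (1 - p)))
                      + poly g3 (of_real p) / poly N (of_real p)"
    by (rule coin_graded_ratio[OF spec[OF graded, of 0] spec[OF graded, of 1]]) blast
  have "{p \<in> {0..1}. \<not> (k1 p \<noteq> 0 \<and>
          k0 p / k1 p = poly g1 (complex_of_real p) / poly N (complex_of_real p)
                          * complex_of_real (sqrt (p / (1 - p)))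
                        + poly g3 (complex_of_real p) / poly N (complex_of_real p))}
        \<subseteq> ?E \<union> {1} \<union> {p. poly N (of_real p) = 0}"
  proof (intro subsetI, rule ccontr)
    fix p assume p: "p \<in> {p \<in> {0..1}. \<not> (k1 p \<noteq> 0 \<and>
          k0 p / k1 p = poly g1 (complex_of_real p) / poly N (complex_of_real p)
                          * complex_of_real (sqrt (p / (1 - p)))
                        + poly g3 (complex_of_real p) / poly N (complex_of_real p))}"
      and "p \<notin> ?E \<union> {1} \<union> {p. poly N (of_real p) = 0}"
    then have p01: "p \<in> {0..1}" and "p \<notin> ?E" "p \<noteq> 1" "poly N (of_real p) \<noteq> 0" by auto
    then obtain c where c: "c \<noteq> 0" "v p 0 = c * k0 p" "v p 1 = c * k1 p" by blast
    have "v p 1 \<noteq> 0 \<and> v p 0 / v p 1 = poly g1 (of_real p) / poly N (of_real p)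
                * of_real (sqrt (p / (1 - p))) + poly g3 (of_real p) / poly N (of_real p)"
      using ratio p01 \<open>p \<noteq> 1\<close> \<open>poly N (of_real p) \<noteq> 0\<close> by simp
    moreover have "v p 0 / v p 1 = k0 p / k1 p" using c(1) unfolding c(2,3) by simp
    ultimately show False using p c(3) by simp
  qed
  then have "finite {p \<in> {0..1}. \<not> (k1 p \<noteq> 0 \<and>
          k0 p / k1 p = poly g1 (complex_of_real p) / poly N (complex_of_real p)
                          * complex_of_real (sqrt (p / (1 - p)))
                        + poly g3 (complex_of_real p) / poly N (complex_of_real p))}"
    using fin_E finite_real_roots[OF \<open>N \<noteq> 0\<close>] finite_subset by auto
  then show ?thesis using \<open>N \<noteq> 0\<close> by blast
qed

subsection \<open>Realisable ratios\<close>

definition simulable_ratio :: "(real \<Rightarrow> complex) \<Rightarrow> bool" where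
  "simulable_ratio r \<longleftrightarrow>
     (\<exists>v. reach 1 v \<and> finite {p \<in> {0..1}. \<not> (v p 1 \<noteq> 0 \<and> v p 0 = r p * v p 1)})"

lemma simulable_ratioI:
  assumes "reach 1 v" "finite F"
    and "\<And>p. p \<in> {0..1} \<Longrightarrow> p \<notin> F \<Longrightarrow> v p 1 \<noteq> 0 \<and> v p 0 = r p * v p 1"
  shows "simulable_ratio r"
proof -
  have "{p \<in> {0..1}. \<not> (v p 1 \<noteq> 0 \<and> v p 0 = r p * v p 1)} \<subseteq> F" using assms(3) by blast
  then show ?thesis unfolding simulable_ratio_def using assms(1,2) finite_subset by blast
qed

lemma simulable_ratio_cong:
  assumes "simulable_ratio r" "finite {p \<in> {0..1}. r p \<noteq> r' p}"
  shows "simulable_ratio r'"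
proof -
  obtain v where "reach 1 v" "finite {p \<in> {0..1}. \<not> (v p 1 \<noteq> 0 \<and> v p 0 = r p * v p 1)}"
    using assms(1) unfolding simulable_ratio_def by blast
  with assms(2) show ?thesis
    by (intro simulable_ratioI[where F = "{p \<in> {0..1}. \<not> (v p 1 \<noteq> 0 \<and> v p 0 = r p * v p 1)}
        \<union> {p \<in> {0..1}. r p \<noteq> r' p}"]) auto
qed

lemma tensor_start: "tensor 0 1 (\<lambda>i. if i = 0 then 1 else 0) w = (\<lambda>i. if i < 2 then w i else 0)"
  by (auto simp: tensor_def fun_eq_iff)

lemma simulable_ratio_const: "simulable_ratio (\<lambda>p. a)"
proof (rule simulable_ratioI[where F = "{}"])
  show "reach 1 (\<lambda>p i. if i < 2 then const_state a i else 0)"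
    using reach.add_const[OF reach.start, of a, unfolded tensor_start] by simp
qed (simp_all add: const_state_def add_nonneg_eq_0_iff)

lemma simulable_ratio_coin: "simulable_ratio (\<lambda>p. of_real (sqrt p) / of_real (sqrt (1 - p)))"
proof (rule simulable_ratioI[where F = "{1}"])
  show "reach 1 (\<lambda>p i. if i < 2 then qcoin p i else 0)"
    using reach.add_coin[OF reach.start, unfolded tensor_start] by simp
qed (auto simp: qcoin_def)

definition postselect_gate ::
    "(nat \<Rightarrow> nat \<Rightarrow> complex) \<Rightarrow> (nat \<Rightarrow> complex) \<Rightarrow> (nat \<Rightarrow> complex) \<Rightarrow> nat \<Rightarrow> complex" where
  "postselect_gate U x y = measure_last 1 0 (apply_op 2 U (tensor 1 1 x y))"

lemma reach_postselect_gate: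
  assumes "reach 1 v" "reach 1 w" "unitary_on 2 U"
  shows "reach 1 (\<lambda>p. postselect_gate U (v p) (w p))"
proof -
  have "reach (1 + 1) (\<lambda>p. apply_op (1 + 1) U (tensor 1 1 (v p) (w p)))"
    using reach.unitary[OF reach.add_sim[OF assms(1,2)]] assms(3) by (simp add: numeral_2_eq_2)
  from reach.measure[OF this, of 0] show ?thesis
    by (simp add: postselect_gate_def numeral_2_eq_2)
qed

lemma lessThan_four: "{..<4::nat} = {0, 1, 2, 3}"
  by auto

lemma postselect_gate_0:
  "postselect_gate U x y 0 =
     U 0 0 * (x 0 * y 0) + U 0 1 * (x 0 * y 1) + U 0 2 * (x 1 * y 0) + U 0 3 * (x 1 * y 1)"
  by (simp add: postselect_gate_def measure_last_def apply_op_def tensor_def lessThan_four)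

lemma postselect_gate_1:
  "postselect_gate U x y 1 =
     U 2 0 * (x 0 * y 0) + U 2 1 * (x 0 * y 1) + U 2 2 * (x 1 * y 0) + U 2 3 * (x 1 * y 1)"
  by (simp add: postselect_gate_def measure_last_def apply_op_def tensor_def lessThan_four)

definition cnot :: "nat \<Rightarrow> nat \<Rightarrow> complex" where
  "cnot i j = (if (i = j \<and> i < 2) \<or> (i = 2 \<and> j = 3) \<or> (i = 3 \<and> j = 2) then 1 else 0)"

lemma unitary_cnot: "unitary_on 2 cnot"
  unfolding unitary_on_def by (simp add: cnot_def numeral_eq_Suc less_Suc_eq)

text \<open>Rows: (|01\<rangle> + |10\<rangle>)/\<surd>2, (|01\<rangle> - |10\<rangle>)/\<surd>2, |11\<rangle>, |00\<rangle>.\<close>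

definition sum_gate :: "nat \<Rightarrow> nat \<Rightarrow> complex" where
  "sum_gate i j =
     (if i = 0 \<and> (j = 1 \<or> j = 2) then of_real (1 / sqrt 2)
      else if i = 1 \<and> j = 1 then of_real (1 / sqrt 2)
      else if i = 1 \<and> j = 2 then - of_real (1 / sqrt 2)
      else if (i = 2 \<and> j = 3) \<or> (i = 3 \<and> j = 0) then 1 else 0)"

lemma unitary_sum_gate: "unitary_on 2 sum_gate"
proof -
  have "cnj (complex_of_real (1 / sqrt 2)) * of_real (1 / sqrt 2) = 1 / 2"
    by (simp flip: of_real_mult)
  then show ?thesis
    unfolding unitary_on_def by (simp add: sum_gate_def numeral_eq_Suc less_Suc_eq)
qed

definition pauli_x :: "nat \<Rightarrow> nat \<Rightarrow> complex" where
  "pauli_x i j = (if i + j = 1 then 1 else 0)"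

lemma unitary_pauli_x: "unitary_on 1 pauli_x"
  unfolding unitary_on_def by (simp add: pauli_x_def numeral_eq_Suc less_Suc_eq)

lemma simulable_ratio_mult:
  assumes "simulable_ratio r" "simulable_ratio r'"
  shows "simulable_ratio (\<lambda>p. r p * r' p)"
proof -
  obtain v where v: "reach 1 v" "finite {p \<in> {0..1}. \<not> (v p 1 \<noteq> 0 \<and> v p 0 = r p * v p 1)}"
    using assms(1) unfolding simulable_ratio_def by blast
  obtain w where w: "reach 1 w" "finite {p \<in> {0..1}. \<not> (w p 1 \<noteq> 0 \<and> w p 0 = r' p * w p 1)}"
    using assms(2) unfolding simulable_ratio_def by blast
  show ?thesis
    by (rule simulable_ratioI[OF reach_postselect_gate[OF v(1) w(1) unitary_cnot] finite_UnI[OF v(2) w(2)]])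
       (unfold postselect_gate_0 postselect_gate_1, auto simp: cnot_def)
qed

lemma simulable_ratio_add:
  assumes "simulable_ratio r" "simulable_ratio r'"
  shows "simulable_ratio (\<lambda>p. r p + r' p)"
proof -
  obtain v where v: "reach 1 v" "finite {p \<in> {0..1}. \<not> (v p 1 \<noteq> 0 \<and> v p 0 = r p * v p 1)}"
    using assms(1) unfolding simulable_ratio_def by blast
  obtain w where w: "reach 1 w" "finite {p \<in> {0..1}. \<not> (w p 1 \<noteq> 0 \<and> w p 0 = r' p * w p 1)}"
    using assms(2) unfolding simulable_ratio_def by blast
  have "simulable_ratio (\<lambda>p. of_real (1 / sqrt 2) * (r p + r' p))"
    by (rule simulable_ratioI[OF reach_postselect_gate[OF v(1) w(1) unitary_sum_gate] finite_UnI[OF v(2) w(2)]])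
       (unfold postselect_gate_0 postselect_gate_1, auto simp: sum_gate_def algebra_simps add_divide_distrib)
  from simulable_ratio_mult[OF simulable_ratio_const[of "of_real (sqrt 2)"] this]
  show ?thesis by (simp add: mult.assoc[symmetric] flip: of_real_mult)
qed

lemma simulable_ratio_inverse:
  assumes "simulable_ratio r" "finite {p \<in> {0..1}. r p = 0}"
  shows "simulable_ratio (\<lambda>p. 1 / r p)"
proof -
  obtain v where v: "reach 1 v" "finite {p \<in> {0..1}. \<not> (v p 1 \<noteq> 0 \<and> v p 0 = r p * v p 1)}"
    using assms(1) unfolding simulable_ratio_def by blast
  have "apply_op 1 pauli_x x 0 = x 1" "apply_op 1 pauli_x x 1 = x 0" for x
    by (simp_all add: apply_op_def pauli_x_def numeral_eq_Suc)
  then show ?thesis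
    by (intro simulable_ratioI[OF reach.unitary[OF v(1) unitary_pauli_x] finite_UnI[OF v(2) assms(2)]])
       auto
qed

lemma simulable_ratio_of_real: "simulable_ratio (\<lambda>p. of_real p)"
proof -
  let ?q = "\<lambda>p. complex_of_real (sqrt p) / of_real (sqrt (1 - p))"
  have eq: "1 + ?q p * ?q p = 1 / (1 - of_real p)" if "p \<in> {0..1}" "p \<noteq> 1" for p
  proof -
    have "?q p * ?q p = of_real (sqrt p * sqrt p / (sqrt (1 - p) * sqrt (1 - p)))"
      by (simp only: of_real_mult of_real_divide times_divide_times_eq)
    also have "\<dots> = of_real p / (1 - of_real p)" using that by simp
    finally have q: "?q p * ?q p = of_real p / (1 - of_real p)" .
    have "1 - complex_of_real p \<noteq> 0"
      using that by (metis of_real_1 of_real_eq_iff right_minus_eq)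
    then show ?thesis unfolding q by (simp add: field_simps)
  qed
  have "finite {p \<in> {0..1}. 1 + ?q p * ?q p \<noteq> 1 / (1 - complex_of_real p)}"
    by (rule finite_subset[of _ "{1}"]) (use eq in auto)
  with simulable_ratio_add[OF simulable_ratio_const simulable_ratio_mult[OF simulable_ratio_coin simulable_ratio_coin]]
  have "simulable_ratio (\<lambda>p. 1 / (1 - complex_of_real p))"
    by (rule simulable_ratio_cong)
  moreover have "finite {p \<in> {0..1}. 1 / (1 - complex_of_real p) = 0}"
    by (rule finite_subset[of _ "{1}"]) auto
  ultimately have "simulable_ratio (\<lambda>p. 1 / (1 / (1 - complex_of_real p)))"
    by (rule simulable_ratio_inverse)
  then have "simulable_ratio (\<lambda>p. 1 - complex_of_real p)" by simp
  from simulable_ratio_add[OF simulable_ratio_mult[OF simulable_ratio_const[of "-1"] this]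
      simulable_ratio_const[of 1]]
  show ?thesis by simp
qed

lemma simulable_ratio_poly: "simulable_ratio (\<lambda>p. poly g (of_real p))"
proof (induction g)
  case 0
  show ?case using simulable_ratio_const[of 0] by simp
next
  case (pCons a g)
  from simulable_ratio_add[OF simulable_ratio_const simulable_ratio_mult[OF simulable_ratio_of_real pCons.IH]]
  show ?case by simp
qed

lemma simulable_ratio_inverse_poly: "g \<noteq> 0 \<Longrightarrow> simulable_ratio (\<lambda>p. 1 / poly g (of_real p))"
  by (rule simulable_ratio_inverse[OF simulable_ratio_poly], rule finite_subset[OF _ finite_real_roots]) auto

lemma simulable_ratio_sqrt_odds: "simulable_ratio (\<lambda>p. of_real (sqrt (p / (1 - p))))"
  using simulable_ratio_coin by (simp add: real_sqrt_divide)

lemma simulable_ratio_imp_simulable: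
  assumes "simulable_ratio (\<lambda>p. k0 p / k1 p)" "finite {p \<in> {0..1}. k1 p = 0}"
  shows "simulable k0 k1"
proof -
  obtain v where v: "reach 1 v"
    and fin: "finite {p \<in> {0..1}. \<not> (v p 1 \<noteq> 0 \<and> v p 0 = k0 p / k1 p * v p 1)}"
    using assms(1) unfolding simulable_ratio_def by blast
  have "v p 1 / k1 p \<noteq> 0 \<and> v p 0 = v p 1 / k1 p * k0 p \<and> v p 1 = v p 1 / k1 p * k1 p"
    if "v p 1 \<noteq> 0" "v p 0 = k0 p / k1 p * v p 1" "k1 p \<noteq> 0" for p
    using that by simp
  then have "{p \<in> {0..1}. \<not> ((v p 0 \<noteq> 0 \<or> v p 1 \<noteq> 0) \<and>
      (\<exists>c. c \<noteq> 0 \<and> v p 0 = c * k0 p \<and> v p 1 = c * k1 p))} \<subseteq>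
      {p \<in> {0..1}. \<not> (v p 1 \<noteq> 0 \<and> v p 0 = k0 p / k1 p * v p 1)} \<union> {p \<in> {0..1}. k1 p = 0}"
    by blast
  then show ?thesis
    unfolding simulable_def using v fin assms(2) finite_subset by blast
qed

lemma ratio_form_imp_simulable:
  fixes k0 k1 :: "real \<Rightarrow> complex"
  assumes "\<exists>g1 g2 g3 g4 :: complex poly. g2 \<noteq> 0 \<and> g4 \<noteq> 0 \<and>
       finite {p \<in> {0..1}. \<not> (k1 p \<noteq> 0 \<and>
          k0 p / k1 p = poly g1 (complex_of_real p) / poly g2 (complex_of_real p)
                          * complex_of_real (sqrt (p / (1 - p)))
                        + poly g3 (complex_of_real p) / poly g4 (complex_of_real p))}"
  shows "simulable k0 k1"
proof -
  obtain g1 g2 g3 g4 :: "complex poly" where "g2 \<noteq> 0" "g4 \<noteq> 0"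
    and fin: "finite {p \<in> {0..1}. \<not> (k1 p \<noteq> 0 \<and>
          k0 p / k1 p = poly g1 (complex_of_real p) / poly g2 (complex_of_real p)
                          * complex_of_real (sqrt (p / (1 - p)))
                        + poly g3 (complex_of_real p) / poly g4 (complex_of_real p))}"
    using assms by blast
  have "simulable_ratio (\<lambda>p. poly g1 (of_real p) * (1 / poly g2 (of_real p))
      * of_real (sqrt (p / (1 - p))) + poly g3 (of_real p) * (1 / poly g4 (of_real p)))"
    by (intro simulable_ratio_add simulable_ratio_mult simulable_ratio_poly
        simulable_ratio_inverse_poly simulable_ratio_sqrt_odds \<open>g2 \<noteq> 0\<close> \<open>g4 \<noteq> 0\<close>)
  then have "simulable_ratio (\<lambda>p. k0 p / k1 p)"
    by (rule simulable_ratio_cong) (rule finite_subset[OF _ fin], auto)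
  moreover have "finite {p \<in> {0..1}. k1 p = 0}"
    by (rule finite_subset[OF _ fin]) auto
  ultimately show ?thesis by (rule simulable_ratio_imp_simulable)
qed

theorem theorem1:
  fixes k0 k1 :: "real \<Rightarrow> complex"
  assumes norm: "\<forall>p \<in> {0..1}. (cmod (k0 p))\<^sup>2 + (cmod (k1 p))\<^sup>2 = 1"
    and k1_nz: "infinite {p \<in> {0..1}. k1 p \<noteq> 0}"
  shows "simulable k0 k1 \<longleftrightarrow>
    (\<exists>g1 g2 g3 g4 :: complex poly. g2 \<noteq> 0 \<and> g4 \<noteq> 0 \<and>
       finite {p \<in> {0..1}. \<not> (k1 p \<noteq> 0 \<and>
          k0 p / k1 p = poly g1 (complex_of_real p) / poly g2 (complex_of_real p)
                          * complex_of_real (sqrt (p / (1 - p)))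
                        + poly g3 (complex_of_real p) / poly g4 (complex_of_real p))})"
  using simulable_imp_ratio_form[OF k1_nz] ratio_form_imp_simulable by blast

end
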